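(* Let $(a_i)_{i\in\mathbb{Z}}$ and $(b_i)_{i\in\mathbb{Z}}$ be jointly stationary processes, with $a_i$ taking values in the positive integers and $b_i$ in a finite or countable alphabet, such that: (i) $(a_i)$ is i.i.d.; (ii) each $a_i$ is independent of the joint collection $\{a_j: j<i\}\cup\{b_j:j<i\}$; (iii) each $b_i$ is almost surely determined by $a_i,b_{i-1},b_{i-2},\dots,b_{i-a_i}$. Then $(b_i)_{i\in\mathbb{Z}}$ is a uniform martingale.
   Context: A stationary process $(X_i)_{i\in\mathbb{Z}}$ on a finite or countable alphabet is a uniform martingale if the conditional distribution of $X_0$ given $X_{-1},\dots,X_{-n}$ converges as $n\to\infty$ to the conditional distribution of $X_0$ given the entire past $X_{-1},X_{-2},\dots$ in total variation, uniformly over all pasts. *)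

theory Defs
  imports "HOL-Probability.Probability"
begin

text \<open>Sub-sigma-algebra of M generated by the random variables X j, j in J
  (X countable-valued, so generated by point preimages).\<close>
definition gen_algebra :: "'w measure \<Rightarrow> (int \<Rightarrow> 'w \<Rightarrow> 'b) \<Rightarrow> int set \<Rightarrow> 'w measure" where
  "gen_algebra M X J = sigma (space M) {X j -` {x} \<inter> space M | j x. j \<in> J}"

definition stationary :: "'w measure \<Rightarrow> (int \<Rightarrow> 'w \<Rightarrow> 'c) \<Rightarrow> bool" where
  "stationary M Z \<longleftrightarrow>
     (\<forall>i. Z i \<in> measurable M (count_space UNIV)) \<and>
     (\<forall>k::int. distr M (PiM UNIV (\<lambda>_. count_space UNIV)) (\<lambda>\<omega> i. Z (i + k) \<omega>)
              = distr M (PiM UNIV (\<lambda>_. count_space UNIV)) (\<lambda>\<omega> i. Z i \<omega>))"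

definition cond_prob0 :: "'w measure \<Rightarrow> (int \<Rightarrow> 'w \<Rightarrow> 'b) \<Rightarrow> int set \<Rightarrow> 'b \<Rightarrow> 'w \<Rightarrow> real" where
  "cond_prob0 M X J x = real_cond_exp M (gen_algebra M X J) (indicator {\<omega> \<in> space M. X 0 \<omega> = x})"

text \<open>Uniform martingale: a stationary process such that the total variation distance
  (here the l1 distance, i.e. twice the TV distance) between the conditional law of X 0
  given X (-1),...,X (-n) and the conditional law of X 0 given the whole past tends to
  zero uniformly over (almost) all pasts, i.e. in essential-supremum norm.\<close>
definition uniform_martingale :: "'w measure \<Rightarrow> (int \<Rightarrow> 'w \<Rightarrow> 'b::countable) \<Rightarrow> bool" where
  "uniform_martingale M X \<longleftrightarrow> stationary M X \<and>
     (\<forall>e>0. \<exists>N. \<forall>n\<ge>N. AE \<omega> in M.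
        (\<integral>\<^sup>+ x. ennreal \<bar>cond_prob0 M X {- int n..-1} x \<omega> - cond_prob0 M X {..-1} x \<omega>\<bar> \<partial>count_space UNIV)
          \<le> ennreal e)"

end

theory Submission
  imports Defs
begin

text \<open>Almost surely \<open>b 0 = f (a 0) [b (-1), \<dots>, b (- a 0)]\<close>. On the event \<open>a 0 = k \<le> n\<close> the
  value \<open>b 0\<close> is thus a function of the last \<open>k\<close> values of \<open>b\<close>, and \<open>a 0\<close> is independent of
  the past. Hence for every \<open>\<sigma>\<close>-algebra \<open>G\<close> between \<open>\<sigma>(b (-n), \<dots>, b (-1))\<close> and
  \<open>\<sigma>(b j : j < 0)\<close>,
  \<open>P(b 0 = x | G) = (\<Sum>k\<le>n. P(a 0 = k) \<cdot> [f k [b (-1), \<dots>, b (-k)] = x]) + P(b 0 = x, a 0 > n | G)\<close>.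
  The sum does not depend on \<open>G\<close>, and the remainders add up over \<open>x\<close> to at most \<open>P(a 0 > n)\<close>,
  so the \<open>l\<^sup>1\<close> distance between the two conditional laws is at most \<open>2 P(a 0 > n) \<longrightarrow> 0\<close>,
  uniformly over the past.\<close>

lemma space_gen_algebra [simp]: "space (gen_algebra M X J) = space M"
  unfolding gen_algebra_def by (simp add: space_measure_of_conv)

lemma sets_gen_algebra:
  "sets (gen_algebra M X J) = sigma_sets (space M) {X j -` {x} \<inter> space M | j x. j \<in> J}"
  unfolding gen_algebra_def by (rule sets_measure_of) auto

lemma measurable_gen_algebra:
  fixes X :: "int \<Rightarrow> 'w \<Rightarrow> 'c::countable"
  assumes "j \<in> J"
  shows "X j \<in> gen_algebra M X J \<rightarrow>\<^sub>M count_space UNIV"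
  unfolding measurable_count_space_eq2_countable space_gen_algebra sets_gen_algebra
  using assms by (auto intro!: sigma_sets.Basic)

lemma subalgebra_gen_algebra:
  fixes X :: "int \<Rightarrow> 'w \<Rightarrow> 'c::countable"
  assumes "\<And>j. j \<in> J \<Longrightarrow> X j \<in> M \<rightarrow>\<^sub>M count_space UNIV"
  shows "subalgebra M (gen_algebra M X J)"
  unfolding subalgebra_def space_gen_algebra sets_gen_algebra
proof (intro conjI refl sets.sigma_sets_subset)
  show "{X j -` {x} \<inter> space M |j x. j \<in> J} \<subseteq> sets M"
    using assms measurable_sets[of _ M "count_space UNIV"] by fastforce
qed

lemma (in prob_space) sigma_finite_subalgebra_gen_algebra:
  fixes X :: "int \<Rightarrow> 'a \<Rightarrow> 'c::countable"
  assumes "\<And>j. j \<in> J \<Longrightarrow> X j \<in> M \<rightarrow>\<^sub>M count_space UNIV"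
  shows "sigma_finite_subalgebra M (gen_algebra M X J)"
  by (intro finite_measure_subalgebra_is_sigma_finite finite_measure_subalgebra.intro
      finite_measure_subalgebra_axioms.intro finite_measure_axioms subalgebra_gen_algebra assms)

lemma sets_gen_algebra_comp_subset:
  fixes Y :: "int \<Rightarrow> 'w \<Rightarrow> 'c::countable"
  assumes "J \<subseteq> K"
  shows "sets (gen_algebra M (\<lambda>j \<omega>. g (Y j \<omega>)) J) \<subseteq> sets (gen_algebra M Y K)"
  unfolding sets_gen_algebra[of M "\<lambda>j \<omega>. g (Y j \<omega>)"]
proof (rule sets.sigma_sets_subset[of _ "gen_algebra M Y K", simplified])
  show "{(\<lambda>\<omega>. g (Y j \<omega>)) -` {x} \<inter> space M |j x. j \<in> J} \<subseteq> sets (gen_algebra M Y K)"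
  proof clarify
    fix j x assume "j \<in> J"
    then have "Y j -` (g -` {x}) \<inter> space (gen_algebra M Y K) \<in> sets (gen_algebra M Y K)"
      using assms by (intro measurable_sets[OF measurable_gen_algebra]) auto
    then show "(\<lambda>\<omega>. g (Y j \<omega>)) -` {x} \<inter> space M \<in> sets (gen_algebra M Y K)"
      by (simp add: vimage_def)
  qed
qed

lemma measurable_map_count_space:
  fixes g :: "'i \<Rightarrow> 'w \<Rightarrow> 'c::countable"
  assumes "\<And>y. y \<in> set ys \<Longrightarrow> g y \<in> N \<rightarrow>\<^sub>M count_space UNIV"
  shows "(\<lambda>\<omega>. map (\<lambda>y. g y \<omega>) ys) \<in> N \<rightarrow>\<^sub>M count_space UNIV"
  using assms
proof (induction ys)
  case (Cons y ys)
  have "(\<lambda>\<omega>. (g y \<omega>, map (\<lambda>y. g y \<omega>) ys)) \<in> N \<rightarrow>\<^sub>M count_space UNIV \<Otimes>\<^sub>M count_space UNIV"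
    using Cons by (intro measurable_Pair) auto
  then have "(\<lambda>\<omega>. (g y \<omega>, map (\<lambda>y. g y \<omega>) ys)) \<in> N \<rightarrow>\<^sub>M count_space UNIV"
    by (simp only: pair_measure_countable[OF countableI_type countableI_type] UNIV_Times_UNIV)
  from measurable_compose[OF this, of "\<lambda>(z, zs). z # zs" "count_space UNIV"]
  show ?case by simp
qed simp

lemma nn_integral_count_space_le_finite_sums:
  fixes h :: "'c::countable \<Rightarrow> ennreal"
  assumes "\<And>X. finite X \<Longrightarrow> sum h X \<le> c"
  shows "(\<integral>\<^sup>+x. h x \<partial>count_space UNIV) \<le> c"
proof -
  define F where "F n = (to_nat :: 'c \<Rightarrow> nat) -` {..<n}" for n
  have finite_F: "finite (F n)" for n
    unfolding F_def by (intro finite_vimageI) (auto intro: inj_to_nat)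
  have "h x = (SUP n. h x * indicator (F n) x)" for x
  proof (rule antisym)
    have "h x = h x * indicator (F (Suc (to_nat x))) x" by (simp add: F_def)
    then show "h x \<le> (SUP n. h x * indicator (F n) x)" by (metis SUP_upper UNIV_I)
  qed (auto intro: SUP_least simp: indicator_def)
  then have "(\<integral>\<^sup>+x. h x \<partial>count_space UNIV) = (SUP n. \<integral>\<^sup>+x. h x * indicator (F n) x \<partial>count_space UNIV)"
    by (simp add: nn_integral_monotone_convergence_SUP[symmetric] incseq_def le_fun_def
        indicator_def F_def)
  also have "\<dots> = (SUP n. sum h (F n))"
    by (simp add: nn_integral_indicator_finite[OF finite_F])
  also have "\<dots> \<le> c"
    by (intro SUP_least assms finite_F)
  finally show ?thesis .
qed

lemma nn_integral_abs_diff_le_finite_sums: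
  fixes u v :: "'c::countable \<Rightarrow> real"
  assumes "\<And>x. 0 \<le> u x" "\<And>x. 0 \<le> v x"
    and "\<And>X. finite X \<Longrightarrow> sum u X \<le> q" "\<And>X. finite X \<Longrightarrow> sum v X \<le> q"
  shows "(\<integral>\<^sup>+x. ennreal \<bar>u x - v x\<bar> \<partial>count_space UNIV) \<le> ennreal (2 * q)"
proof (rule nn_integral_count_space_le_finite_sums)
  fix X :: "'c set" assume X: "finite X"
  have "(\<Sum>x\<in>X. \<bar>u x - v x\<bar>) \<le> (\<Sum>x\<in>X. u x + v x)"
    using assms(1,2) by (intro sum_mono) (simp add: abs_le_iff add_increasing add_increasing2)
  also have "\<dots> \<le> 2 * q"
    using assms(3,4)[OF X] by (simp add: sum.distrib)
  finally show "(\<Sum>x\<in>X. ennreal \<bar>u x - v x\<bar>) \<le> ennreal (2 * q)"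
    by (simp add: sum_ennreal ennreal_leI)
qed

lemma stationary_comp:
  fixes Z :: "int \<Rightarrow> 'w \<Rightarrow> 'c" and g :: "'c \<Rightarrow> 'd"
  assumes "stationary M Z"
  shows "stationary M (\<lambda>i \<omega>. g (Z i \<omega>))"
proof -
  let ?P = "PiM (UNIV :: int set) (\<lambda>_. count_space (UNIV :: 'c set))"
  let ?Q = "PiM (UNIV :: int set) (\<lambda>_. count_space (UNIV :: 'd set))"
  have Z: "Z i \<in> M \<rightarrow>\<^sub>M count_space UNIV"
    and shift: "distr M ?P (\<lambda>\<omega> i. Z (i + k) \<omega>) = distr M ?P (\<lambda>\<omega> i. Z i \<omega>)" for i k
    using assms unfolding stationary_def by blast+
  have map_g: "(\<lambda>z i. g (z i)) \<in> ?P \<rightarrow>\<^sub>M ?Q"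
    by (rule measurable_PiM_single') (auto intro: measurable_compose[OF measurable_component_singleton])
  have "(\<lambda>\<omega> i. Z (i + k) \<omega>) \<in> M \<rightarrow>\<^sub>M ?P" for k
    by (rule measurable_PiM_single') (auto intro: Z)
  then have distr_g: "distr M ?Q (\<lambda>\<omega> i. g (Z (i + k) \<omega>))
      = distr (distr M ?P (\<lambda>\<omega> i. Z (i + k) \<omega>)) ?Q (\<lambda>z i. g (z i))" for k
    by (simp add: distr_distr[OF map_g] comp_def)
  have "distr M ?Q (\<lambda>\<omega> i. g (Z (i + k) \<omega>)) = distr M ?Q (\<lambda>\<omega> i. g (Z i \<omega>))" for k
    using distr_g[of k] distr_g[of 0] shift[of k] by simp
  then show ?thesis
    unfolding stationary_def using measurable_compose[OF Z measurable_count_space] by blast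
qed

lemma (in prob_space) real_cond_exp_indicator_Int_indep:
  assumes G: "sigma_finite_subalgebra M G"
    and indep: "indep_set A B" and "sets G \<subseteq> B" and T: "T \<in> A" and S: "S \<in> sets G"
  shows "AE \<omega> in M. real_cond_exp M G (indicator (T \<inter> S)) \<omega> = prob T * indicator S \<omega>"
proof -
  interpret G: sigma_finite_subalgebra M G by (fact G)
  have SB: "S' \<in> B" if "S' \<in> sets G" for S' using that assms(3) by blast
  have TM: "T \<in> events" and SM: "S \<in> events"
    using indep_setD_ev1[OF indep] indep_setD_ev2[OF indep] T SB[OF S] by auto
  show ?thesis
  proof (rule G.real_cond_exp_charact)
    fix C assume C: "C \<in> sets G"
    then have CS: "C \<inter> S \<in> sets G" and CM: "C \<in> events"
      using S G.subalg by (auto simp: subalgebra_def)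
    have "(\<integral>x\<in>C. indicator (T \<inter> S) x \<partial>M) = prob (T \<inter> (C \<inter> S))"
      using TM SM CM unfolding set_lebesgue_integral_def
      by (simp add: indicator_inter_arith[symmetric] Int_ac)
    also have "\<dots> = prob T * prob (C \<inter> S)"
      using indep_setD[OF indep T SB[OF CS]] .
    also have "\<dots> = (\<integral>x. prob T * indicator (C \<inter> S) x \<partial>M)"
      using SM CM by simp
    also have "\<dots> = (\<integral>x\<in>C. prob T * indicator S x \<partial>M)"
      unfolding set_lebesgue_integral_def
      by (intro Bochner_Integration.integral_cong) (auto simp: indicator_def)
    finally show "(\<integral>x\<in>C. indicator (T \<inter> S) x \<partial>M) = (\<integral>x\<in>C. prob T * indicator S x \<partial>M)" .
  next
    show "integrable M (indicator (T \<inter> S) :: 'a \<Rightarrow> real)"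
      using TM SM by (simp add: less_top[symmetric])
    show "integrable M (\<lambda>x. prob T * indicator S x)"
      using SM by (simp add: less_top[symmetric])
    show "(\<lambda>x. prob T * indicator S x) \<in> borel_measurable G"
      using S by measurable
  qed
qed

text \<open>Only time \<open>0\<close> enters: the uniform martingale property concerns the conditional law
  of \<open>b 0\<close> given the past.\<close>

locale memory_process = prob_space M for M :: "'w measure" +
  fixes a :: "int \<Rightarrow> 'w \<Rightarrow> nat" and b :: "int \<Rightarrow> 'w \<Rightarrow> 'b::countable"
    and f :: "nat \<Rightarrow> 'b list \<Rightarrow> 'b"
  assumes measurable_a [measurable]: "\<And>i. a i \<in> M \<rightarrow>\<^sub>M count_space UNIV"
    and measurable_b [measurable]: "\<And>i. b i \<in> M \<rightarrow>\<^sub>M count_space UNIV"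
    and length_indep_past:
      "indep_set (sets (gen_algebra M a {0})) (sets (gen_algebra M (\<lambda>j \<omega>. (a j \<omega>, b j \<omega>)) {..<0}))"
    and determined_by_memory:
      "AE \<omega> in M. b 0 \<omega> = f (a 0 \<omega>) (map (\<lambda>k. b (- int k) \<omega>) [1..<a 0 \<omega> + 1])"
begin

definition memory :: "nat \<Rightarrow> 'w \<Rightarrow> 'b list" where
  "memory k \<omega> = map (\<lambda>j. b (- int j) \<omega>) [1..<k + 1]"

definition memory_event :: "nat \<Rightarrow> 'b \<Rightarrow> 'w set" where
  "memory_event k x = {\<omega> \<in> space M. f k (memory k \<omega>) = x}"

definition long_memory :: "nat \<Rightarrow> 'w set" where
  "long_memory n = {\<omega> \<in> space M. n < a 0 \<omega>}"

definition long_memory_value :: "nat \<Rightarrow> 'b \<Rightarrow> 'w set" where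
  "long_memory_value n x = {\<omega> \<in> long_memory n. b 0 \<omega> = x}"

lemma sigma_finite_subalgebra_past: "sigma_finite_subalgebra M (gen_algebra M b J)"
  by (intro sigma_finite_subalgebra_gen_algebra measurable_b)

lemma sets_gen_algebra_b_subset_events: "sets (gen_algebra M b J) \<subseteq> events"
  using subalgebra_gen_algebra[of J b M] measurable_b by (auto simp: subalgebra_def)

lemma length_event_sets: "{\<omega> \<in> space M. P (a 0 \<omega>)} \<in> sets (gen_algebra M a {0})"
proof -
  have "a 0 -` {k. P k} \<inter> space (gen_algebra M a {0}) \<in> sets (gen_algebra M a {0})"
    by (intro measurable_sets[OF measurable_gen_algebra]) auto
  then show ?thesis by (simp add: vimage_def Int_def conj_commute)
qed

lemma long_memory_in_events: "long_memory n \<in> events"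
  unfolding long_memory_def by measurable

lemma long_memory_value_in_events: "long_memory_value n x \<in> events"
  unfolding long_memory_value_def long_memory_def by measurable

lemma memory_event_sets:
  assumes "{- int k..-1} \<subseteq> J"
  shows "memory_event k x \<in> sets (gen_algebra M b J)"
proof -
  have "memory k \<in> gen_algebra M b J \<rightarrow>\<^sub>M count_space UNIV"
    unfolding memory_def[abs_def] using assms
    by (intro measurable_map_count_space measurable_gen_algebra) auto
  from measurable_sets[OF measurable_compose[OF this measurable_count_space], of "{x}"]
  show ?thesis by (simp add: memory_event_def vimage_def Int_def conj_commute)
qed

lemma cond_exp_length_event_Int:
  assumes "J \<subseteq> {..<0}" and "S \<in> sets (gen_algebra M b J)"
  shows "AE \<omega> in M. real_cond_exp M (gen_algebra M b J) (indicator ({\<omega> \<in> space M. P (a 0 \<omega>)} \<inter> S)) \<omega>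
    = prob {\<omega> \<in> space M. P (a 0 \<omega>)} * indicator S \<omega>"
  using sets_gen_algebra_comp_subset[OF assms(1), of M snd "\<lambda>j \<omega>. (a j \<omega>, b j \<omega>)"]
  by (intro real_cond_exp_indicator_Int_indep[OF sigma_finite_subalgebra_past length_indep_past _
        length_event_sets assms(2)]) simp

lemma indicator_value_split:
  "AE \<omega> in M. indicator {\<omega> \<in> space M. b 0 \<omega> = x} \<omega>
     = (\<Sum>k\<le>n. indicator ({\<omega> \<in> space M. a 0 \<omega> = k} \<inter> memory_event k x) \<omega>)
       + (indicator (long_memory_value n x) \<omega> :: real)"
  using determined_by_memory AE_space
proof eventually_elim
  case (elim \<omega>)
  then have b0: "b 0 \<omega> = f (a 0 \<omega>) (memory (a 0 \<omega>) \<omega>)"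
    unfolding memory_def by simp
  have "(\<Sum>k\<le>n. indicator ({\<omega> \<in> space M. a 0 \<omega> = k} \<inter> memory_event k x) \<omega> :: real)
      = (\<Sum>k\<le>n. if k = a 0 \<omega> then indicator (memory_event (a 0 \<omega>) x) \<omega> else 0)"
    using \<open>\<omega> \<in> space M\<close> by (intro sum.cong) (auto simp: indicator_def)
  then show ?case
    using b0 \<open>\<omega> \<in> space M\<close>
    by (simp add: indicator_def memory_event_def long_memory_value_def long_memory_def)
qed

lemma cond_prob0_split:
  assumes window: "{- int n..-1} \<subseteq> J" and past: "J \<subseteq> {..<0}"
  shows "AE \<omega> in M. cond_prob0 M b J x \<omega>
    = (\<Sum>k\<le>n. prob {\<omega> \<in> space M. a 0 \<omega> = k} * indicator (memory_event k x) \<omega>)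
      + real_cond_exp M (gen_algebra M b J) (indicator (long_memory_value n x)) \<omega>"
proof -
  let ?G = "gen_algebra M b J"
  let ?E = "\<lambda>k. {\<omega> \<in> space M. a 0 \<omega> = k} \<inter> memory_event k x"
  interpret G: sigma_finite_subalgebra M ?G by (rule sigma_finite_subalgebra_past)
  have memory_event_G: "memory_event k x \<in> sets ?G" if "k \<le> n" for k
    using that by (intro memory_event_sets order_trans[OF _ window]) auto
  have E_events: "?E k \<in> events" for k
    using memory_event_sets[of k UNIV x] sets_gen_algebra_b_subset_events
    by (intro sets.Int) (measurable, blast)
  have int_E: "integrable M (indicator (?E k) :: 'w \<Rightarrow> real)" for k
    using E_events by (simp add: less_top[symmetric])
  have int_R: "integrable M (indicator (long_memory_value n x) :: 'w \<Rightarrow> real)"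
    using long_memory_value_in_events by (simp add: less_top[symmetric])
  have split: "AE \<omega> in M. cond_prob0 M b J x \<omega>
      = real_cond_exp M ?G (\<lambda>\<omega>. (\<Sum>k\<le>n. indicator (?E k) \<omega>) + indicator (long_memory_value n x) \<omega>) \<omega>"
    unfolding cond_prob0_def using E_events long_memory_value_in_events
    by (intro G.real_cond_exp_cong[OF indicator_value_split]) auto
  have add: "AE \<omega> in M. real_cond_exp M ?G (\<lambda>\<omega>. (\<Sum>k\<le>n. indicator (?E k) \<omega>) + indicator (long_memory_value n x) \<omega>) \<omega>
      = real_cond_exp M ?G (\<lambda>\<omega>. \<Sum>k\<le>n. indicator (?E k) \<omega>) \<omega>
        + real_cond_exp M ?G (indicator (long_memory_value n x)) \<omega>"
    using int_E int_R by (intro G.real_cond_exp_add) auto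
  have sum: "AE \<omega> in M. real_cond_exp M ?G (\<lambda>\<omega>. \<Sum>k\<le>n. indicator (?E k) \<omega>) \<omega>
      = (\<Sum>k\<le>n. real_cond_exp M ?G (indicator (?E k)) \<omega>)"
    by (intro G.real_cond_exp_sum int_E)
  have "AE \<omega> in M. \<forall>k\<in>{..n}. real_cond_exp M ?G (indicator (?E k)) \<omega>
      = prob {\<omega> \<in> space M. a 0 \<omega> = k} * indicator (memory_event k x) \<omega>"
    using past memory_event_G
    by (subst AE_finite_all) (auto intro: cond_exp_length_event_Int)
  then have indep: "AE \<omega> in M. (\<Sum>k\<le>n. real_cond_exp M ?G (indicator (?E k)) \<omega>)
      = (\<Sum>k\<le>n. prob {\<omega> \<in> space M. a 0 \<omega> = k} * indicator (memory_event k x) \<omega>)"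
    by eventually_elim simp
  from split add sum indep show ?thesis
    by eventually_elim simp
qed

lemma sum_cond_exp_long_memory_value_le:
  assumes past: "J \<subseteq> {..<0}" and "finite X"
  shows "AE \<omega> in M. (\<Sum>x\<in>X. real_cond_exp M (gen_algebra M b J) (indicator (long_memory_value n x)) \<omega>)
    \<le> prob (long_memory n)"
proof -
  let ?G = "gen_algebra M b J"
  interpret G: sigma_finite_subalgebra M ?G by (rule sigma_finite_subalgebra_past)
  have int_R: "integrable M (indicator (long_memory_value n x) :: 'w \<Rightarrow> real)" for x
    using long_memory_value_in_events by (simp add: less_top[symmetric])
  have int_Q: "integrable M (indicator (long_memory n) :: 'w \<Rightarrow> real)"
    using long_memory_in_events by (simp add: less_top[symmetric])
  have sum: "AE \<omega> in M. real_cond_exp M ?G (\<lambda>\<omega>. \<Sum>x\<in>X. indicator (long_memory_value n x) \<omega>) \<omega>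
      = (\<Sum>x\<in>X. real_cond_exp M ?G (indicator (long_memory_value n x)) \<omega>)"
    by (intro G.real_cond_exp_sum int_R)
  have "(\<Sum>x\<in>X. indicator (long_memory_value n x) \<omega> :: real) \<le> indicator (long_memory n) \<omega>" for \<omega>
  proof -
    have "(\<Sum>x\<in>X. indicator (long_memory_value n x) \<omega> :: real)
        = (\<Sum>x\<in>X. if x = b 0 \<omega> then indicator (long_memory n) \<omega> else 0)"
      by (intro sum.cong) (auto simp: indicator_def long_memory_value_def)
    then show ?thesis
      using \<open>finite X\<close> by (simp add: sum.delta')
  qed
  then have mono: "AE \<omega> in M. real_cond_exp M ?G (\<lambda>\<omega>. \<Sum>x\<in>X. indicator (long_memory_value n x) \<omega>) \<omega>
      \<le> real_cond_exp M ?G (indicator (long_memory n)) \<omega>"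
    using int_R int_Q by (intro G.real_cond_exp_mono) auto
  have "AE \<omega> in M. real_cond_exp M ?G (indicator (long_memory n \<inter> space M)) \<omega>
      = prob (long_memory n) * indicator (space M) \<omega>"
    unfolding long_memory_def by (intro cond_exp_length_event_Int past) (metis sets.top space_gen_algebra)
  then have indep: "AE \<omega> in M. real_cond_exp M ?G (indicator (long_memory n)) \<omega> = prob (long_memory n)"
    using AE_space by eventually_elim (simp add: long_memory_def Int_absorb2)
  from sum mono indep show ?thesis
    by eventually_elim simp
qed

lemma l1_dist_cond_prob0_le:
  "AE \<omega> in M. (\<integral>\<^sup>+ x. ennreal \<bar>cond_prob0 M b {- int n..-1} x \<omega> - cond_prob0 M b {..-1} x \<omega>\<bar> \<partial>count_space UNIV)
    \<le> ennreal (2 * prob (long_memory n))"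
proof -
  define u where "u x = real_cond_exp M (gen_algebra M b {- int n..-1}) (indicator (long_memory_value n x))" for x
  define v where "v x = real_cond_exp M (gen_algebra M b {..-1}) (indicator (long_memory_value n x))" for x
  have "AE \<omega> in M. \<forall>x. cond_prob0 M b {- int n..-1} x \<omega> - cond_prob0 M b {..-1} x \<omega> = u x \<omega> - v x \<omega>"
  proof (subst AE_all_countable, intro allI)
    fix x
    have "{- int n..-1} \<subseteq> {..<0}" "{- int n..-1} \<subseteq> {..-1::int}" "{..-1::int} \<subseteq> {..<0}"
      by auto
    from cond_prob0_split[OF order_refl this(1), of x] cond_prob0_split[OF this(2,3), of x]
    show "AE \<omega> in M. cond_prob0 M b {- int n..-1} x \<omega> - cond_prob0 M b {..-1} x \<omega> = u x \<omega> - v x \<omega>"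
      unfolding u_def v_def by eventually_elim auto
  qed
  moreover have "AE \<omega> in M. \<forall>x. 0 \<le> u x \<omega> \<and> 0 \<le> v x \<omega>"
  proof (subst AE_all_countable, intro allI)
    fix x
    interpret U: sigma_finite_subalgebra M "gen_algebra M b {- int n..-1}"
      by (rule sigma_finite_subalgebra_past)
    interpret V: sigma_finite_subalgebra M "gen_algebra M b {..-1}"
      by (rule sigma_finite_subalgebra_past)
    show "AE \<omega> in M. 0 \<le> u x \<omega> \<and> 0 \<le> v x \<omega>"
      using U.real_cond_exp_pos V.real_cond_exp_pos long_memory_value_in_events
      unfolding u_def v_def by auto
  qed
  moreover have "AE \<omega> in M. \<forall>X\<in>Collect finite. sum (\<lambda>x. u x \<omega>) X \<le> prob (long_memory n)
      \<and> sum (\<lambda>x. v x \<omega>) X \<le> prob (long_memory n)"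
    unfolding u_def v_def
    by (intro AE_ball_countable' countable_Collect_finite AE_conjI sum_cond_exp_long_memory_value_le) auto
  ultimately show ?thesis
  proof eventually_elim
    case (elim \<omega>)
    then have "(\<integral>\<^sup>+ x. ennreal \<bar>u x \<omega> - v x \<omega>\<bar> \<partial>count_space UNIV) \<le> ennreal (2 * prob (long_memory n))"
      by (intro nn_integral_abs_diff_le_finite_sums) auto
    with elim(1) show ?case by simp
  qed
qed

lemma prob_long_memory_tendsto_0: "(\<lambda>n. prob (long_memory n)) \<longlonglongrightarrow> 0"
proof -
  have "(\<lambda>n. prob (long_memory n)) \<longlonglongrightarrow> prob (\<Inter>n. long_memory n)"
    using long_memory_in_events
    by (intro finite_Lim_measure_decseq) (auto simp: decseq_def long_memory_def)
  moreover have "(\<Inter>n. long_memory n) = {}"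
    by (auto simp: long_memory_def dest!: spec[of _ "a 0 _"])
  ultimately show ?thesis by simp
qed

lemma cond_prob0_uniform_convergence:
  "\<forall>e>0. \<exists>N. \<forall>n\<ge>N. AE \<omega> in M.
     (\<integral>\<^sup>+ x. ennreal \<bar>cond_prob0 M b {- int n..-1} x \<omega> - cond_prob0 M b {..-1} x \<omega>\<bar> \<partial>count_space UNIV)
       \<le> ennreal e"
proof (intro allI impI)
  fix e :: real assume "e > 0"
  then obtain N where N: "\<And>n. n \<ge> N \<Longrightarrow> prob (long_memory n) < e / 2"
    using order_tendstoD(2)[OF prob_long_memory_tendsto_0, of "e / 2"] by (auto simp: eventually_sequentially)
  have "AE \<omega> in M.
     (\<integral>\<^sup>+ x. ennreal \<bar>cond_prob0 M b {- int n..-1} x \<omega> - cond_prob0 M b {..-1} x \<omega>\<bar> \<partial>count_space UNIV)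
       \<le> ennreal e" if "n \<ge> N" for n
    using l1_dist_cond_prob0_le[of n]
  proof eventually_elim
    case (elim \<omega>)
    also have "ennreal (2 * prob (long_memory n)) \<le> ennreal e"
      using N[OF that] by (intro ennreal_leI) simp
    finally show ?case .
  qed
  then show "\<exists>N. \<forall>n\<ge>N. AE \<omega> in M.
     (\<integral>\<^sup>+ x. ennreal \<bar>cond_prob0 M b {- int n..-1} x \<omega> - cond_prob0 M b {..-1} x \<omega>\<bar> \<partial>count_space UNIV)
       \<le> ennreal e"
    by blast
qed

end

theorem mainTheorem9:
  fixes M :: "'w measure"
    and a :: "int \<Rightarrow> 'w \<Rightarrow> nat"
    and b :: "int \<Rightarrow> 'w \<Rightarrow> 'b::countable"
  assumes P: "prob_space M"
    and pos: "\<And>i \<omega>. \<omega> \<in> space M \<Longrightarrow> a i \<omega> \<ge> 1"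
    and joint_stat: "stationary M (\<lambda>i \<omega>. (a i \<omega>, b i \<omega>))"
    and iid_indep: "prob_space.indep_vars M (\<lambda>_. count_space UNIV) a UNIV"
    and iid_ident: "\<And>i. distr M (count_space UNIV) (a i) = distr M (count_space UNIV) (a 0)"
    and indep_past: "\<And>i. prob_space.indep_set M
              (sets (gen_algebra M a {i}))
              (sets (gen_algebra M (\<lambda>j \<omega>. (a j \<omega>, b j \<omega>)) {..<i}))"
    and determined: "\<And>i. \<exists>f :: nat \<Rightarrow> 'b list \<Rightarrow> 'b.
              AE \<omega> in M. b i \<omega> = f (a i \<omega>) (map (\<lambda>k. b (i - int k) \<omega>) [1..<a i \<omega> + 1])"
  shows "uniform_martingale M b"
proof -
  obtain f where f: "AE \<omega> in M. b 0 \<omega> = f (a 0 \<omega>) (map (\<lambda>k. b (- int k) \<omega>) [1..<a 0 \<omega> + 1])"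
    using determined[of 0] by auto
  have ab: "(\<lambda>\<omega>. (a i \<omega>, b i \<omega>)) \<in> M \<rightarrow>\<^sub>M count_space UNIV" for i
    using joint_stat unfolding stationary_def by blast
  have a: "a i \<in> M \<rightarrow>\<^sub>M count_space UNIV" and b: "b i \<in> M \<rightarrow>\<^sub>M count_space UNIV" for i
    using measurable_compose[OF ab measurable_count_space[where f = fst]]
      measurable_compose[OF ab measurable_count_space[where f = snd]] by simp_all
  interpret memory_process M a b f
    by (intro memory_process.intro memory_process_axioms.intro P a b indep_past f)
  have "stationary M b"
    using stationary_comp[OF joint_stat, of snd] by (simp only: snd_conv)
  with cond_prob0_uniform_convergence show ?thesis
    unfolding uniform_martingale_def by blast
qed

end
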